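(* Let $X,Y$ be Banach spaces and $f:X\to Y$ a map. Suppose there exist a closed ball $B_r$ of radius $r>0$ in $X$, a closed ball $B_s$ of radius $s\ge0$ in $Y$, and a compact set $K\subseteq Y$ such that $f(B_r)\subseteq K+B_s$. Then $$\varphi_f(r):=\inf\{\|f(x)-f(y)\|: x,y\in X,\ \|x-y\|\ge r\}\le 2s.$$
   Context: All Banach spaces are real and infinite-dimensional. $K+B_s=\{k+b: k\in K, b\in B_s\}$. *)

theory Defs
  imports "HOL-Analysis.Analysis"
begin

definition infinite_dimensional :: "'a::real_normed_vector itself \<Rightarrow> bool" where
  "infinite_dimensional (_::'a itself) \<longleftrightarrow> (\<forall>B::'a set. finite B \<longrightarrow> span B \<noteq> UNIV)"

definition phi_mod :: "('a::real_normed_vector \<Rightarrow> 'b::real_normed_vector) \<Rightarrow> real \<Rightarrow> real" where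
  "phi_mod f r = Inf {norm (f x - f y) | x y. norm (x - y) \<ge> r}"

end

theory Submission
  imports Defs
begin

text \<open>In an infinite-dimensional space the Riesz lemma (in its exact form, available because
  finite-dimensional subspaces are locally compact) yields unit vectors \<open>g n\<close> that are pairwise
  at distance at least 1, so the points \<open>c + r g n\<close> of \<open>B\<^sub>r\<close> are pairwise at distance at
  least \<open>r\<close>. Write \<open>f (c + r g n) = k n + b n\<close> with \<open>k n \<in> K\<close> and \<open>b n \<in> B\<^sub>s\<close>. By compactness of
  \<open>K\<close> two of the \<open>k n\<close> are arbitrarily close, while any two \<open>b n\<close> are at most \<open>2s\<close> apart.\<close>

lemma closed_if_compact_Int_cballs:
  fixes V :: "'a::real_normed_vector set"
  assumes "\<And>R. compact (V \<inter> cball 0 R)"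
  shows "closed V"
proof -
  have "x \<in> V" if "x \<in> closure V" for x
  proof -
    have "x \<in> ball x 1 \<inter> closure V" using that by simp
    also have "\<dots> \<subseteq> closure (ball x 1 \<inter> V)" by (rule open_Int_closure_subset) simp
    also have "\<dots> \<subseteq> closure (V \<inter> cball 0 (norm x + 1))"
    proof (rule closure_mono, rule subsetI)
      fix y assume "y \<in> ball x 1 \<inter> V"
      then show "y \<in> V \<inter> cball 0 (norm x + 1)"
        using norm_triangle_ineq2[of y x] by (simp add: dist_norm norm_minus_commute)
    qed
    also have "\<dots> = V \<inter> cball 0 (norm x + 1)"
      using assms compact_imp_closed closure_closed by blast
    finally show ?thesis by blast
  qed
  then show ?thesis using closure_subset_eq closure_subset by blast
qed

lemma infdist_scaleR_le_norm:
  fixes a x :: "'a::real_normed_vector"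
  assumes "subspace V" "x - t *\<^sub>R a \<in> V"
  shows "\<bar>t\<bar> * infdist a V \<le> norm x"
proof (cases "t = 0")
  case True
  then show ?thesis by simp
next
  case False
  have "a - x /\<^sub>R t \<in> V"
    using subspace_scale[OF assms, of "- inverse t"] False by (simp add: algebra_simps)
  then have "infdist a V \<le> norm (x /\<^sub>R t)"
    using infdist_le[of "a - x /\<^sub>R t" V a] by (simp add: dist_norm)
  then show ?thesis
    using False by (simp add: field_simps)
qed

lemma compact_span_insert_Int_cball:
  fixes a :: "'a::real_normed_vector"
  assumes compact_S: "\<And>R. compact (span S \<inter> cball 0 R)" and a: "a \<notin> span S"
  shows "compact (span (insert a S) \<inter> cball 0 R)"
proof -
  define \<delta> where "\<delta> = infdist a (span S)"
  have "\<delta> > 0"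
    unfolding \<delta>_def
    using infdist_pos_not_in_closed[OF closed_if_compact_Int_cballs[OF compact_S] _ a] span_zero
    by blast
  define T where "T = (\<lambda>(v, t). v + t *\<^sub>R a) `
    ((span S \<inter> cball 0 (R + R / \<delta> * norm a)) \<times> cball (0::real) (R / \<delta>))"
  have "compact T"
    unfolding T_def case_prod_unfold
    by (intro compact_continuous_image compact_Times compact_S compact_cball continuous_intros)
  \<comment> \<open>In a decomposition \<open>x = v + t a\<close>, the coefficient \<open>t\<close> and hence \<open>v\<close> are bounded by \<open>\<parallel>x\<parallel>\<close>.\<close>
  have "span (insert a S) \<inter> cball 0 R \<subseteq> T"
  proof
    fix x assume x: "x \<in> span (insert a S) \<inter> cball 0 R"
    then obtain t where v: "x - t *\<^sub>R a \<in> span S" by (auto simp: span_insert)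
    have "\<bar>t\<bar> * \<delta> \<le> R"
      using infdist_scaleR_le_norm[OF subspace_span v] x by (simp add: \<delta>_def)
    then have t: "\<bar>t\<bar> \<le> R / \<delta>" using \<open>\<delta> > 0\<close> by (simp add: field_simps)
    have "norm (x - t *\<^sub>R a) \<le> norm x + \<bar>t\<bar> * norm a"
      using norm_triangle_ineq4[of x "t *\<^sub>R a"] by simp
    also have "\<dots> \<le> R + R / \<delta> * norm a"
      using x t by (intro add_mono mult_right_mono) auto
    finally show "x \<in> T"
      unfolding T_def using v t by (intro image_eqI[where x = "(x - t *\<^sub>R a, t)"]) auto
  qed
  moreover have "T \<subseteq> span (insert a S)"
  proof (clarsimp simp: T_def)
    fix v t assume "v \<in> span S"
    then have "v \<in> span (insert a S)" using span_mono[of S "insert a S"] by blast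
    then show "v + t *\<^sub>R a \<in> span (insert a S)"
      by (rule span_add[OF _ span_scale[OF span_base]]) simp_all
  qed
  ultimately have "span (insert a S) \<inter> cball 0 R = T \<inter> cball 0 R" by blast
  then show ?thesis using compact_Int_closed[OF \<open>compact T\<close> closed_cball] by simp
qed

lemma compact_span_Int_cball:
  fixes S :: "'a::real_normed_vector set"
  assumes "finite S"
  shows "compact (span S \<inter> cball 0 R)"
  using assms
proof (induction S arbitrary: R rule: finite_induct)
  case empty
  show ?case using compact_Int_closed[of "{0}" "cball 0 R"] by simp
next
  case (insert a S)
  then show ?case
    by (cases "a \<in> span S") (auto simp: span_redundant intro: compact_span_insert_Int_cball)
qed

text \<open>Exact Riesz lemma: normalise \<open>z - v\<^sub>0\<close> for a nearest point \<open>v\<^sub>0\<close> of \<open>span S\<close> to \<open>z\<close>,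
  which exists because \<open>span S\<close> is locally compact.\<close>

lemma exists_unit_far_from_span:
  fixes S :: "'a::real_normed_vector set"
  assumes "finite S" "z \<notin> span S"
  shows "\<exists>u. norm u = 1 \<and> (\<forall>w\<in>span S. 1 \<le> norm (u - w))"
proof -
  define C where "C = span S \<inter> cball 0 (2 * norm z)"
  have "0 \<in> C" by (simp add: C_def span_zero)
  have "\<exists>v\<in>C. \<forall>y\<in>C. norm (z - v) \<le> norm (z - y)"
    using compact_span_Int_cball[OF assms(1)] \<open>0 \<in> C\<close> unfolding C_def
    by (intro continuous_attains_inf continuous_intros) auto
  then obtain v0 where "v0 \<in> C" and v0_min: "\<And>y. y \<in> C \<Longrightarrow> norm (z - v0) \<le> norm (z - y)"
    by blast
  have v0: "v0 \<in> span S" using \<open>v0 \<in> C\<close> by (simp add: C_def)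
  have nearest: "norm (z - v0) \<le> norm (z - w)" if w: "w \<in> span S" for w
  proof (cases "norm w \<le> 2 * norm z")
    case True
    then show ?thesis using v0_min w by (simp add: C_def)
  next
    case False
    have "norm (z - v0) \<le> norm z" using v0_min[OF \<open>0 \<in> C\<close>] by simp
    also have "\<dots> \<le> norm (z - w)"
      using False norm_triangle_ineq3[of w z] by (simp add: norm_minus_commute)
    finally show ?thesis .
  qed
  define \<delta> where "\<delta> = norm (z - v0)"
  have "\<delta> > 0" unfolding \<delta>_def using v0 assms(2) by auto
  define u where "u = (1 / \<delta>) *\<^sub>R (z - v0)"
  have "1 \<le> norm (u - w)" if w: "w \<in> span S" for w
  proof -
    have "\<delta> \<le> norm (z - (v0 + \<delta> *\<^sub>R w))"
      unfolding \<delta>_def using v0 w by (intro nearest span_add span_mul)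
    also have "z - (v0 + \<delta> *\<^sub>R w) = \<delta> *\<^sub>R (u - w)"
      unfolding u_def using \<open>\<delta> > 0\<close> by (simp add: algebra_simps)
    finally show ?thesis using \<open>\<delta> > 0\<close> by simp
  qed
  moreover have "norm u = 1" unfolding u_def using \<open>\<delta> > 0\<close> by (simp add: \<delta>_def)
  ultimately show ?thesis by blast
qed

lemma sequence_extending_finite_sets:
  assumes "\<And>B. finite B \<Longrightarrow> \<exists>u. Q B u"
  obtains g :: "nat \<Rightarrow> 'a" where "\<And>n. Q (g ` {..<n}) (g n)"
proof -
  define F where "F B = (SOME u. Q B u)" for B
  define S where "S = rec_nat {} (\<lambda>_ B. insert (F B) B)"
  define g where "g n = F (S n)" for n
  have S_eq: "S n = g ` {..<n}" for n
    by (induction n) (auto simp: S_def g_def lessThan_Suc)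
  have "Q (S n) (F (S n))" for n
    unfolding F_def by (rule someI_ex, rule assms) (simp add: S_eq)
  then have "Q (S n) (g n)" for n by (simp only: g_def)
  then show ?thesis unfolding S_eq by (rule that)
qed

lemma infinite_dimensional_separated_unit_sequence:
  assumes "infinite_dimensional TYPE('a)"
  obtains g :: "nat \<Rightarrow> 'a::real_normed_vector"
  where "\<And>n. norm (g n) = 1" and "\<And>m n. m \<noteq> n \<Longrightarrow> 1 \<le> norm (g m - g n)"
proof -
  define Q where "Q B u \<longleftrightarrow> norm u = 1 \<and> (\<forall>w\<in>span B. 1 \<le> norm (u - w))"
    for B :: "'a set" and u :: 'a
  have "\<exists>u. Q B u" if "finite B" for B
    using assms that exists_unit_far_from_span unfolding infinite_dimensional_def Q_def by blast
  then obtain g :: "nat \<Rightarrow> 'a" where "\<And>n. Q (g ` {..<n}) (g n)"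
    using sequence_extending_finite_sets[of Q] by blast
  then have g: "\<And>n. norm (g n) = 1 \<and> (\<forall>w\<in>span (g ` {..<n}). 1 \<le> norm (g n - w))"
    by (simp add: Q_def)
  have sep: "1 \<le> norm (g n - g m)" if "m < n" for m n
    using g[of n] that by (auto intro: span_base)
  have "1 \<le> norm (g m - g n)" if "m \<noteq> n" for m n
    using sep[of m n] sep[of n m] that linorder_neq_iff by (auto simp: norm_minus_commute)
  with g that show ?thesis by blast
qed

lemma exists_close_pair_in_compact_plus_cball:
  fixes y :: "nat \<Rightarrow> 'b::real_normed_vector"
  assumes "compact K" "range y \<subseteq> {k + b | k b. k \<in> K \<and> b \<in> cball d s}" "e > 0"
  shows "\<exists>m n. m \<noteq> n \<and> norm (y m - y n) \<le> 2 * s + e"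
proof -
  obtain k b where kb: "\<And>n. y n = k n + b n" "\<And>n. k n \<in> K" "\<And>n. b n \<in> cball d s"
    using assms(2) by (simp add: image_subset_iff) metis
  obtain l \<sigma> where "strict_mono \<sigma>" "(k \<circ> \<sigma>) \<longlonglongrightarrow> l"
    using assms(1) kb(2) unfolding compact_eq_seq_compact_metric seq_compact_def by metis
  then have "Cauchy (k \<circ> \<sigma>)" by (simp add: LIMSEQ_imp_Cauchy)
  then obtain M where "\<forall>m\<ge>M. \<forall>n\<ge>M. dist ((k \<circ> \<sigma>) m) ((k \<circ> \<sigma>) n) < e"
    using metric_CauchyD \<open>e > 0\<close> by blast
  then have M: "dist (k (\<sigma> M)) (k (\<sigma> (Suc M))) < e" by simp
  have b_close: "norm (b m - b n) \<le> 2 * s" for m n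
    using norm_triangle_ineq[of "b m - d" "d - b n"] kb(3)[of m] kb(3)[of n]
    by (simp add: dist_norm norm_minus_commute)
  have "y (\<sigma> M) - y (\<sigma> (Suc M)) = (k (\<sigma> M) - k (\<sigma> (Suc M))) + (b (\<sigma> M) - b (\<sigma> (Suc M)))"
    by (simp add: kb(1) algebra_simps)
  then have "norm (y (\<sigma> M) - y (\<sigma> (Suc M)))
      \<le> norm (k (\<sigma> M) - k (\<sigma> (Suc M))) + norm (b (\<sigma> M) - b (\<sigma> (Suc M)))"
    by (metis norm_triangle_ineq)
  also have "\<dots> \<le> 2 * s + e"
    using M b_close[of "\<sigma> M" "\<sigma> (Suc M)"] by (simp add: dist_norm)
  finally have "norm (y (\<sigma> M) - y (\<sigma> (Suc M))) \<le> 2 * s + e" .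
  moreover have "\<sigma> M \<noteq> \<sigma> (Suc M)" using \<open>strict_mono \<sigma>\<close> strict_mono_eq by fastforce
  ultimately show ?thesis by blast
qed

lemma phi_mod_le_if_near_pairs:
  assumes "\<And>e. e > 0 \<Longrightarrow> \<exists>x y. r \<le> norm (x - y) \<and> norm (f x - f y) \<le> a + e"
  shows "phi_mod f r \<le> a"
proof -
  define A where "A = {norm (f x - f y) | x y. norm (x - y) \<ge> r}"
  have "bdd_below A" unfolding A_def by (rule bdd_belowI[where m = 0]) auto
  have "Inf A \<le> a + e" if "e > 0" for e
    using assms[OF that] cInf_lower2[OF _ _ \<open>bdd_below A\<close>] unfolding A_def by blast
  then show ?thesis unfolding phi_mod_def A_def[symmetric] by (rule field_le_epsilon)
qed

theorem lemma4p3: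
  fixes f :: "'a::banach \<Rightarrow> 'b::banach"
    and c :: 'a and d :: 'b and r s :: real and K :: "'b set"
  assumes "infinite_dimensional TYPE('a)"
    and "infinite_dimensional TYPE('b)"
    and "r > 0" and "s \<ge> 0"
    and "compact K"
    and "f ` cball c r \<subseteq> {k + b | k b. k \<in> K \<and> b \<in> cball d s}"
  shows "phi_mod f r \<le> 2 * s"
proof (rule phi_mod_le_if_near_pairs)
  fix e :: real assume "e > 0"
  obtain g :: "nat \<Rightarrow> 'a" where g_unit: "\<And>n. norm (g n) = 1"
    and g_sep: "\<And>m n. m \<noteq> n \<Longrightarrow> 1 \<le> norm (g m - g n)"
    using infinite_dimensional_separated_unit_sequence[OF assms(1)] by blast
  define x where "x n = c + r *\<^sub>R g n" for n
  have "range x \<subseteq> cball c r"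
    using g_unit \<open>r > 0\<close> by (auto simp: x_def dist_norm)
  then have fx: "range (f \<circ> x) \<subseteq> {k + b | k b. k \<in> K \<and> b \<in> cball d s}"
    using assms(6) by (auto simp: image_subset_iff)
  obtain m n where "m \<noteq> n" and close: "norm (f (x m) - f (x n)) \<le> 2 * s + e"
    using exists_close_pair_in_compact_plus_cball[OF assms(5) fx \<open>e > 0\<close>] by auto
  have "norm (x m - x n) = r * norm (g m - g n)"
    using \<open>r > 0\<close> by (simp add: x_def flip: scaleR_diff_right)
  also have "\<dots> \<ge> r" using g_sep[OF \<open>m \<noteq> n\<close>] \<open>r > 0\<close> by simp
  finally show "\<exists>x y. r \<le> norm (x - y) \<and> norm (f x - f y) \<le> 2 * s + e"
    using close by blast
qed

end
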